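(* The sequence $(v_k)_{k\in\mathbb N}$ of represented tensors produced by the ALS method satisfies $\|v_{k+1}-v_k\|_A\to0$ as $k\to\infty$, where $\|v\|_A=\sqrt{\langle Av,v\rangle}$.
   Context: Let $\mathcal V=\bigotimes_{\nu=1}^d\mathbb R^{m_\nu}\cong\mathbb R^N$ with the Euclidean inner product $\langle\cdot,\cdot\rangle$. Let $A\in\mathbb R^{N\times N}$ be symmetric positive definite, $b\in\mathcal V\setminus\{0\}$, $f(v)=\frac{1}{\|b\|^2}(\frac12\langle Av,v\rangle-\langle b,v\rangle)$. Let $L\ge d$, $P_1,\dots,P_L$ finite-dimensional real inner product spaces, $P=P_1\times\dots\times P_L$, $U:P\to\mathcal V$ multilinear. For $\mathbf p\in P$, $W_{\mu,\mathbf p^{[\mu]}}:P_\mu\to\mathcal V$ is $q\mapsto U(p_1,\dots,p_{\mu-1},q,p_{\mu+1},\dots,p_L)$; $X^T$ transpose, $X^+$ pseudoinverse. ALS: choose $\mathbf p_1=(p_1^1,\dots,p_L^1)\in P$; for $k=1,2,\dots$ and $\mu=1,\dots,L$ in order, $W_{k,\mu}:=W_{\mu,(p_1^{k+1},\dots,p_{\mu-1}^{k+1},p_{\mu+1}^k,\dots,p_L^k)}$ and $p_\mu^{k+1}:=(W_{k,\mu}^TAW_{k,\mu})^+W_{k,\mu}^Tb$ (the minimum-norm minimiser of $q\mapsto f(U(p_1^{k+1},\dots,p_{\mu-1}^{k+1},q,p_{\mu+1}^k,\dots,p_L^k))$). Put $v_k=U(p_1^k,\dots,p_L^k)$. *)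

theory Defs
  imports "HOL-Analysis.Analysis"
begin

definition normA :: "real^'n^'n \<Rightarrow> real^'n \<Rightarrow> real" where
  "normA A v = sqrt ((A *v v) \<bullet> v)"

definition fobj :: "real^'n^'n \<Rightarrow> real^'n \<Rightarrow> real^'n \<Rightarrow> real" where
  "fobj A b v = (1 / (norm b)^2) * ((1/2) * ((A *v v) \<bullet> v) - b \<bullet> v)"

text \<open>Parameter tuples p = (p_1,...,p_L) are modelled as functions nat => 'b,
  where component mu lives in the subspace P mu (mu in 1..L) of the
  Euclidean space 'b.\<close>
definition in_params :: "nat \<Rightarrow> (nat \<Rightarrow> 'b set) \<Rightarrow> (nat \<Rightarrow> 'b) \<Rightarrow> bool" where
  "in_params L P p \<longleftrightarrow> (\<forall>\<nu>\<in>{1..L}. p \<nu> \<in> P \<nu>)"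

definition multilinear_on ::
  "nat \<Rightarrow> (nat \<Rightarrow> 'b::real_vector set) \<Rightarrow> ((nat \<Rightarrow> 'b) \<Rightarrow> 'c::real_vector) \<Rightarrow> bool" where
  "multilinear_on L P U \<longleftrightarrow>
     (\<forall>p p'. (\<forall>\<nu>\<in>{1..L}. p \<nu> = p' \<nu>) \<longrightarrow> U p = U p') \<and>
     (\<forall>\<mu>\<in>{1..L}. \<forall>p. in_params L P p \<longrightarrow>
        (\<forall>x\<in>P \<mu>. \<forall>y\<in>P \<mu>. \<forall>a b::real.
           U (p(\<mu> := a *\<^sub>R x + b *\<^sub>R y)) = a *\<^sub>R U (p(\<mu> := x)) + b *\<^sub>R U (p(\<mu> := y))))"

definition als_arg :: "(nat \<Rightarrow> 'b) \<Rightarrow> (nat \<Rightarrow> 'b) \<Rightarrow> nat \<Rightarrow> 'b \<Rightarrow> nat \<Rightarrow> 'b" where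
  "als_arg pnew pold \<mu> q = (\<lambda>\<nu>. if \<nu> < \<mu> then pnew \<nu> else if \<nu> = \<mu> then q else pold \<nu>)"

definition min_norm_minimiser :: "('b::real_normed_vector \<Rightarrow> real) \<Rightarrow> 'b set \<Rightarrow> 'b \<Rightarrow> bool" where
  "min_norm_minimiser g S x \<longleftrightarrow>
     x \<in> S \<and> (\<forall>q\<in>S. g x \<le> g q) \<and>
     (\<forall>y\<in>S. (\<forall>q\<in>S. g y \<le> g q) \<longrightarrow> norm x \<le> norm y)"

end

theory Submission
  imports Defs
begin

text \<open>
  Since U is multilinear, updating a single component moves the represented tensor along
  a line, on which f is a convex quadratic; an exact line minimiser therefore lowers f by
  exactly \<open>\<parallel>\<Delta>\<parallel>\<^sub>A\<^sup>2 / (2\<parallel>b\<parallel>\<^sup>2)\<close>, where \<open>\<Delta>\<close> is the change of the tensor.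
  Summing over the L micro-steps of a sweep and using
  \<open>\<parallel>x\<^sub>1 + \<dots> + x\<^sub>L\<parallel>\<^sub>A\<^sup>2 \<le> 2\<^sup>L (\<parallel>x\<^sub>1\<parallel>\<^sub>A\<^sup>2 + \<dots> + \<parallel>x\<^sub>L\<parallel>\<^sub>A\<^sup>2)\<close> gives
  \<open>\<parallel>v' - v\<parallel>\<^sub>A\<^sup>2 \<le> 2\<^sup>L\<^sup>+\<^sup>1 \<parallel>b\<parallel>\<^sup>2 (f v - f v')\<close> for consecutive iterates v, v'.
  As f is bounded below, the decreasing sequence of values \<open>f v\<^sub>k\<close> converges, so its
  decrements tend to zero.
\<close>

lemma symmetric_matrix_inner_commute:
  fixes A :: "real^'n^'n"
  assumes "transpose A = A"
  shows "(A *v x) \<bullet> y = (A *v y) \<bullet> x"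
  by (metis assms dot_lmul_matrix inner_commute transpose_matrix_vector)

lemma matrix_quadratic_form_neg:
  fixes A :: "real^'n^'n"
  shows "(A *v (- x)) \<bullet> (- x) = (A *v x) \<bullet> x"
  by (simp add: linear_neg[OF matrix_vector_mul_linear])

lemma matrix_quadratic_form_add_le:
  fixes A :: "real^'n^'n"
  assumes "transpose A = A" and "\<forall>v. 0 \<le> (A *v v) \<bullet> v"
  shows "(A *v (x + y)) \<bullet> (x + y) \<le> 2 * ((A *v x) \<bullet> x) + 2 * ((A *v y) \<bullet> y)"
proof -
  have sym: "(A *v y) \<bullet> x = (A *v x) \<bullet> y"
    using symmetric_matrix_inner_commute[OF assms(1)] .
  have "(A *v (x + y)) \<bullet> (x + y) + (A *v (x - y)) \<bullet> (x - y)
      = 2 * ((A *v x) \<bullet> x) + 2 * ((A *v y) \<bullet> y)"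
    unfolding matrix_vector_right_distrib matrix_vector_mult_diff_distrib
      inner_add_left inner_add_right inner_diff_left inner_diff_right sym
    by linarith
  moreover have "0 \<le> (A *v (x - y)) \<bullet> (x - y)"
    using assms(2) by blast
  ultimately show ?thesis by linarith
qed

lemma matrix_quadratic_form_sum_le:
  fixes A :: "real^'n^'n"
  assumes "transpose A = A" and "\<forall>v. 0 \<le> (A *v v) \<bullet> v"
  shows "(A *v (\<Sum>j<n. w j)) \<bullet> (\<Sum>j<n. w j) \<le> 2 ^ n * (\<Sum>j<n. (A *v w j) \<bullet> w j)"
proof (induction n)
  case 0
  then show ?case by simp
next
  case (Suc n)
  let ?Q = "\<lambda>v. (A *v v) \<bullet> v"
  have "?Q (\<Sum>j<Suc n. w j) = ?Q (w n + (\<Sum>j<n. w j))"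
    by (simp add: add.commute)
  also have "\<dots> \<le> 2 * ?Q (w n) + 2 * ?Q (\<Sum>j<n. w j)"
    by (rule matrix_quadratic_form_add_le[OF assms])
  also have "\<dots> \<le> 2 ^ Suc n * ?Q (w n) + 2 * (2 ^ n * (\<Sum>j<n. ?Q (w j)))"
  proof -
    have "(2::real) \<le> 2 ^ Suc n"
      using one_le_power[of "2::real" n] by simp
    then have "2 * ?Q (w n) \<le> 2 ^ Suc n * ?Q (w n)"
      using assms(2) by (simp add: mult_right_mono)
    then show ?thesis using Suc.IH by linarith
  qed
  also have "\<dots> = 2 ^ Suc n * (\<Sum>j<Suc n. ?Q (w j))"
    by (simp add: algebra_simps)
  finally show ?case .
qed

lemma fobj_add_scaleR:
  fixes A :: "real^'n^'n"
  assumes "transpose A = A"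
  shows "fobj A b (X + t *\<^sub>R D) = fobj A b X
     + t * ((A *v X) \<bullet> D - b \<bullet> D) / (norm b)^2
     + t^2 * ((A *v D) \<bullet> D) / (2 * (norm b)^2)"
proof -
  have sym: "(A *v D) \<bullet> X = (A *v X) \<bullet> D"
    using symmetric_matrix_inner_commute[OF assms] .
  have "(A *v (X + t *\<^sub>R D)) \<bullet> (X + t *\<^sub>R D)
      = (A *v X) \<bullet> X + 2 * t * ((A *v X) \<bullet> D) + t^2 * ((A *v D) \<bullet> D)"
    by (simp add: algebra_simps matrix_vector_mult_scaleR inner_add_left inner_add_right
        sym power2_eq_square)
  moreover have "b \<bullet> (X + t *\<^sub>R D) = b \<bullet> X + t * (b \<bullet> D)"
    by (simp add: inner_add_right)
  ultimately show ?thesis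
    unfolding fobj_def by (cases "norm b = 0") (simp_all add: field_simps power2_eq_square)
qed

lemma fobj_bounded_below:
  fixes A :: "real^'n^'n"
  assumes "transpose A = A" and "\<forall>v. v \<noteq> 0 \<longrightarrow> 0 < (A *v v) \<bullet> v"
  obtains B where "\<And>v. B \<le> fobj A b v"
proof -
  have "inj ((*v) A)"
    using assms(2) by (force simp: linear_injective_0[OF matrix_vector_mul_linear])
  then have "surj ((*v) A)"
    using linear_injective_imp_surjective matrix_vector_mul_linear by blast
  then obtain u where u: "A *v u = b"
    by (metis surjD)
  have "fobj A b u \<le> fobj A b v" for v
  proof -
    have "0 \<le> (A *v (v - u)) \<bullet> (v - u)"
      using assms(2) by (cases "v - u = 0") (auto intro: less_imp_le)
    then show ?thesis
      using fobj_add_scaleR[OF assms(1), of b u 1 "v - u"] u by simp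
  qed
  then show thesis by (rule that)
qed

lemma linear_plus_nonneg_quadratic_nonneg_imp_zero:
  fixes a c :: real
  assumes "0 \<le> c" and "\<forall>t. 0 \<le> a * t + c * t^2"
  shows "a = 0"
proof (rule ccontr)
  assume "a \<noteq> 0"
  define t where "t = - a / (c + 1)"
  have "a + c * t = a / (c + 1)"
    using assms(1) by (simp add: t_def field_simps)
  have "a * t + c * t^2 = t * (a + c * t)"
    by (simp add: algebra_simps power2_eq_square)
  also have "\<dots> = t * (a / (c + 1))"
    using \<open>a + c * t = a / (c + 1)\<close> by simp
  also have "\<dots> = - (a * a) / ((c + 1) * (c + 1))"
    by (simp add: t_def)
  also have "\<dots> < 0"
  proof -
    have "0 < a * a"
      using \<open>a \<noteq> 0\<close> not_real_square_gt_zero by blast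
    moreover have "0 < (c + 1) * (c + 1)"
      using assms(1) by simp
    ultimately show ?thesis
      using divide_pos_pos by simp
  qed
  finally show False using assms(2) by (meson not_le)
qed

lemma fobj_line_minimiser_gap:
  fixes A :: "real^'n^'n"
  assumes "transpose A = A" and "0 \<le> (A *v D) \<bullet> D"
    and "\<forall>t. fobj A b X \<le> fobj A b (X + t *\<^sub>R D)"
  shows "fobj A b (X + D) = fobj A b X + ((A *v D) \<bullet> D) / (2 * (norm b)^2)"
proof -
  let ?a = "((A *v X) \<bullet> D - b \<bullet> D) / (norm b)^2"
  let ?c = "((A *v D) \<bullet> D) / (2 * (norm b)^2)"
  have "\<forall>t. 0 \<le> ?a * t + ?c * t^2"
    using assms(3) fobj_add_scaleR[OF assms(1), of b X] by (simp add: algebra_simps)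
  then have "?a = 0"
    using assms(2) linear_plus_nonneg_quadratic_nonneg_imp_zero[of ?c ?a] by simp
  then show ?thesis
    using fobj_add_scaleR[OF assms(1), of b X 1 D] by simp
qed

lemma multilinear_on_cong:
  assumes "multilinear_on L P U" and "\<forall>\<nu>\<in>{1..L}. q \<nu> = q' \<nu>"
  shows "U q = U q'"
  using assms unfolding multilinear_on_def by blast

lemma multilinear_on_update:
  assumes "multilinear_on L P U" and "\<mu> \<in> {1..L}" and "in_params L P q"
    and "x \<in> P \<mu>" and "y \<in> P \<mu>"
  shows "U (q(\<mu> := s *\<^sub>R x + t *\<^sub>R y)) = s *\<^sub>R U (q(\<mu> := x)) + t *\<^sub>R U (q(\<mu> := y))"
  using assms unfolding multilinear_on_def by blast

lemma fobj_coordinate_minimiser_gap: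
  fixes A :: "real^'n^'n" and U :: "(nat \<Rightarrow> 'b::real_vector) \<Rightarrow> real^'n"
  assumes A: "transpose A = A" "\<forall>v. 0 \<le> (A *v v) \<bullet> v"
    and U: "subspace (P \<mu>)" "multilinear_on L P U" "\<mu> \<in> {1..L}" "in_params L P q"
    and xy: "x \<in> P \<mu>" "y \<in> P \<mu>"
    and min: "\<forall>z\<in>P \<mu>. fobj A b (U (q(\<mu> := x))) \<le> fobj A b (U (q(\<mu> := z)))"
  shows "fobj A b (U (q(\<mu> := y))) = fobj A b (U (q(\<mu> := x)))
     + ((A *v (U (q(\<mu> := y)) - U (q(\<mu> := x)))) \<bullet> (U (q(\<mu> := y)) - U (q(\<mu> := x))))
       / (2 * (norm b)^2)"
proof -
  define X where "X = U (q(\<mu> := x))"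
  define Y where "Y = U (q(\<mu> := y))"
  have "\<forall>t. fobj A b X \<le> fobj A b (X + t *\<^sub>R (Y - X))"
  proof
    fix t :: real
    have "U (q(\<mu> := (1 - t) *\<^sub>R x + t *\<^sub>R y)) = X + t *\<^sub>R (Y - X)"
      using multilinear_on_update[OF U(2-4) xy, of "1 - t" t]
      by (simp add: X_def Y_def algebra_simps)
    moreover have "(1 - t) *\<^sub>R x + t *\<^sub>R y \<in> P \<mu>"
      using U(1) xy by (simp add: subspace_add subspace_scale)
    ultimately show "fobj A b X \<le> fobj A b (X + t *\<^sub>R (Y - X))"
      using min unfolding X_def by metis
  qed
  from fobj_line_minimiser_gap[OF A(1) _ this] A(2) show ?thesis
    unfolding X_def Y_def by simp
qed

definition als_partial :: "(nat \<Rightarrow> 'b) \<Rightarrow> (nat \<Rightarrow> 'b) \<Rightarrow> nat \<Rightarrow> nat \<Rightarrow> 'b" where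
  "als_partial pnew pold j = (\<lambda>\<nu>. if \<nu> \<le> j then pnew \<nu> else pold \<nu>)"

lemma als_arg_eq_als_partial_update:
  "als_arg pnew pold (Suc j) q = (als_partial pnew pold j)(Suc j := q)"
  by (auto simp: als_arg_def als_partial_def fun_eq_iff)

lemma als_partial_update_new:
  "(als_partial pnew pold j)(Suc j := pnew (Suc j)) = als_partial pnew pold (Suc j)"
  by (auto simp: als_partial_def fun_eq_iff)

lemma als_partial_update_old:
  "(als_partial pnew pold j)(Suc j := pold (Suc j)) = als_partial pnew pold j"
  by (auto simp: als_partial_def fun_eq_iff)

lemma in_params_als_partial:
  "in_params L P pnew \<Longrightarrow> in_params L P pold \<Longrightarrow> in_params L P (als_partial pnew pold j)"
  by (simp add: in_params_def als_partial_def)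

lemma multilinear_on_als_partial_0:
  "multilinear_on L P U \<Longrightarrow> U (als_partial pnew pold 0) = U pold"
  by (auto intro: multilinear_on_cong simp: als_partial_def)

lemma multilinear_on_als_partial_L:
  "multilinear_on L P U \<Longrightarrow> U (als_partial pnew pold L) = U pnew"
  by (auto intro: multilinear_on_cong simp: als_partial_def)

lemma als_sweep_gap:
  fixes A :: "real^'n^'n" and U :: "(nat \<Rightarrow> 'b::real_normed_vector) \<Rightarrow> real^'n"
  assumes A: "transpose A = A" "\<forall>v. 0 \<le> (A *v v) \<bullet> v"
    and U: "\<forall>\<mu>\<in>{1..L}. subspace (P \<mu>)" "multilinear_on L P U"
    and old: "in_params L P pold"
    and new: "\<forall>\<mu>\<in>{1..L}.
      min_norm_minimiser (\<lambda>q. fobj A b (U (als_arg pnew pold \<mu> q))) (P \<mu>) (pnew \<mu>)"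
  defines "z \<equiv> \<lambda>j. U (als_partial pnew pold j)"
  shows "fobj A b (U pold) = fobj A b (U pnew)
     + (\<Sum>j<L. (A *v (z j - z (Suc j))) \<bullet> (z j - z (Suc j))) / (2 * (norm b)^2)"
proof -
  have new_params: "in_params L P pnew"
    using new unfolding in_params_def min_norm_minimiser_def by blast
  have micro: "fobj A b (z j) = fobj A b (z (Suc j))
      + ((A *v (z j - z (Suc j))) \<bullet> (z j - z (Suc j))) / (2 * (norm b)^2)"
    if "j < L" for j
  proof -
    let ?q = "als_partial pnew pold j"
    have \<mu>: "Suc j \<in> {1..L}" using that by simp
    have "min_norm_minimiser (\<lambda>q. fobj A b (U (?q(Suc j := q)))) (P (Suc j)) (pnew (Suc j))"
      using new[rule_format, OF \<mu>] unfolding als_arg_eq_als_partial_update .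
    then have x: "pnew (Suc j) \<in> P (Suc j)"
      and min: "\<forall>y\<in>P (Suc j). fobj A b (U (?q(Suc j := pnew (Suc j)))) \<le> fobj A b (U (?q(Suc j := y)))"
      unfolding min_norm_minimiser_def by blast+
    have y: "pold (Suc j) \<in> P (Suc j)"
      using old \<mu> unfolding in_params_def by blast
    have sub: "subspace (P (Suc j))"
      using U(1) \<mu> by blast
    from fobj_coordinate_minimiser_gap[OF A sub U(2) \<mu> in_params_als_partial[OF new_params old] x y min]
    show ?thesis
      unfolding z_def als_partial_update_new als_partial_update_old .
  qed
  have "z 0 = U pold" "z L = U pnew"
    unfolding z_def using multilinear_on_als_partial_0 multilinear_on_als_partial_L U(2) by blast+
  then have "fobj A b (U pold) - fobj A b (U pnew) = (\<Sum>j<L. fobj A b (z j) - fobj A b (z (Suc j)))"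
    using sum_lessThan_telescope'[of "\<lambda>j. fobj A b (z j)" L] by simp
  also have "\<dots> = (\<Sum>j<L. ((A *v (z j - z (Suc j))) \<bullet> (z j - z (Suc j))) / (2 * (norm b)^2))"
    using micro by (intro sum.cong) auto
  finally show ?thesis
    by (simp add: sum_divide_distrib)
qed

lemma als_sweep_decrease:
  fixes A :: "real^'n^'n" and U :: "(nat \<Rightarrow> 'b::real_normed_vector) \<Rightarrow> real^'n"
  assumes A: "transpose A = A" "\<forall>v. 0 \<le> (A *v v) \<bullet> v" and "b \<noteq> 0"
    and U: "\<forall>\<mu>\<in>{1..L}. subspace (P \<mu>)" "multilinear_on L P U"
    and old: "in_params L P pold"
    and new: "\<forall>\<mu>\<in>{1..L}.
      min_norm_minimiser (\<lambda>q. fobj A b (U (als_arg pnew pold \<mu> q))) (P \<mu>) (pnew \<mu>)"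
  shows "(A *v (U pnew - U pold)) \<bullet> (U pnew - U pold)
     \<le> 2 ^ Suc L * (norm b)^2 * (fobj A b (U pold) - fobj A b (U pnew))"
proof -
  define z where "z j = U (als_partial pnew pold j)" for j
  define S where "S = (\<Sum>j<L. (A *v (z j - z (Suc j))) \<bullet> (z j - z (Suc j)))"
  have gap: "fobj A b (U pold) - fobj A b (U pnew) = S / (2 * (norm b)^2)"
    using als_sweep_gap[OF A U old new] unfolding z_def S_def by simp
  have "z 0 = U pold" "z L = U pnew"
    unfolding z_def using multilinear_on_als_partial_0 multilinear_on_als_partial_L U(2) by blast+
  then have "U pnew - U pold = - (\<Sum>j<L. z j - z (Suc j))"
    using sum_lessThan_telescope'[of z L] by simp
  then have "(A *v (U pnew - U pold)) \<bullet> (U pnew - U pold)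
      = (A *v (\<Sum>j<L. z j - z (Suc j))) \<bullet> (\<Sum>j<L. z j - z (Suc j))"
    by (simp only: matrix_quadratic_form_neg)
  also have "\<dots> \<le> 2 ^ L * S"
    unfolding S_def by (rule matrix_quadratic_form_sum_le[OF A])
  also have "\<dots> = 2 ^ Suc L * (norm b)^2 * (fobj A b (U pold) - fobj A b (U pnew))"
    using \<open>b \<noteq> 0\<close> unfolding gap by simp
  finally show ?thesis .
qed

lemma tendsto_zero_if_bounded_by_decrements:
  fixes F e :: "nat \<Rightarrow> real"
  assumes "0 < C" and "\<And>k. 0 \<le> e k" and "\<And>k. e k \<le> C * (F k - F (Suc k))"
    and "\<And>k. B \<le> F k"
  shows "e \<longlonglongrightarrow> 0"
proof -
  have "F (Suc k) \<le> F k" for k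
  proof -
    have "0 \<le> C * (F k - F (Suc k))"
      using assms(2,3)[of k] by linarith
    then show ?thesis
      using assms(1) by (simp add: zero_le_mult_iff)
  qed
  then have "decseq F"
    by (simp add: decseq_SucI)
  then obtain l where l: "F \<longlonglongrightarrow> l"
    using decseq_convergent assms(4) by metis
  have "(\<lambda>k. C * (F k - F (Suc k))) \<longlonglongrightarrow> C * (l - l)"
    by (intro tendsto_mult tendsto_const tendsto_diff l LIMSEQ_Suc)
  then have decrements: "(\<lambda>k. C * (F k - F (Suc k))) \<longlonglongrightarrow> 0"
    by simp
  show ?thesis
  proof (rule tendsto_sandwich[OF _ _ tendsto_const decrements])
    show "\<forall>\<^sub>F k in sequentially. 0 \<le> e k"
      using assms(2) by simp
    show "\<forall>\<^sub>F k in sequentially. e k \<le> C * (F k - F (Suc k))"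
      using assms(3) by simp
  qed
qed

theorem mainTheorem12:
  fixes d L :: nat and m :: "nat \<Rightarrow> nat"
    and A :: "real^'n^'n" and b :: "real^'n"
    and P :: "nat \<Rightarrow> 'b::euclidean_space set"
    and U :: "(nat \<Rightarrow> 'b) \<Rightarrow> real^'n"
    and p :: "nat \<Rightarrow> nat \<Rightarrow> 'b"
  assumes dims: "d \<ge> 1" "CARD('n) = (\<Prod>\<nu>\<in>{1..d}. m \<nu>)" "\<forall>\<nu>\<in>{1..d}. m \<nu> \<ge> 1"
    and Ld: "L \<ge> d"
    and Asym: "transpose A = A"
    and Apos: "\<forall>v. v \<noteq> 0 \<longrightarrow> (A *v v) \<bullet> v > 0"
    and bnz: "b \<noteq> 0"
    and Psub: "\<forall>\<mu>\<in>{1..L}. subspace (P \<mu>)"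
    and Umult: "multilinear_on L P U"
    and init: "in_params L P (p 1)"
    and step: "\<forall>k\<ge>1. \<forall>\<mu>\<in>{1..L}.
        min_norm_minimiser (\<lambda>q. fobj A b (U (als_arg (p (Suc k)) (p k) \<mu> q))) (P \<mu>) (p (Suc k) \<mu>)"
  shows "(\<lambda>k. normA A (U (p (Suc k)) - U (p k))) \<longlonglongrightarrow> 0"
proof -
  have Anonneg: "\<forall>v. 0 \<le> (A *v v) \<bullet> v"
    using Apos by (metis matrix_vector_mult_0_right inner_zero_left order.refl less_imp_le)
  obtain B where B: "\<And>v. B \<le> fobj A b v"
    using fobj_bounded_below[OF Asym Apos] by blast
  have params: "in_params L P (p (Suc k))" for k
    using init step unfolding in_params_def min_norm_minimiser_def
    by (cases k) auto
  \<comment> \<open>\<open>p 0\<close> is unconstrained, so the sweeps are indexed from 1.\<close>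
  define \<Delta> where "\<Delta> k = U (p (Suc (Suc k))) - U (p (Suc k))" for k
  have "(\<lambda>k. (A *v \<Delta> k) \<bullet> \<Delta> k) \<longlonglongrightarrow> 0"
  proof (rule tendsto_zero_if_bounded_by_decrements)
    show "(A *v \<Delta> k) \<bullet> \<Delta> k
        \<le> 2 ^ Suc L * (norm b)^2 * (fobj A b (U (p (Suc k))) - fobj A b (U (p (Suc (Suc k)))))"
      for k
    proof -
      have "1 \<le> Suc k" by simp
      then show ?thesis
        unfolding \<Delta>_def using als_sweep_decrease[OF Asym Anonneg bnz Psub Umult params] step by blast
    qed
  qed (use bnz Anonneg B in auto)
  then have "(\<lambda>k. normA A (\<Delta> k)) \<longlonglongrightarrow> 0"
    unfolding normA_def using tendsto_real_sqrt by force
  then show ?thesis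
    unfolding \<Delta>_def by (rule LIMSEQ_imp_Suc)
qed

end
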